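(* Suppose the block size is infinite and let $r>0$. The solitary-or-posted-price mechanism with reserve price $r$ satisfies weak UIC, weak MIC, and $c$-weak-SCP for every integer $c\ge1$.
   Context: Setting (TFM). Each user $i$ has a true value $v_i\ge0$ and submits a single bid $b_i\ge0$. A TFM consists of an inclusion rule (run by the miner, choosing which bids to include; the block size is unbounded here) and confirmation, payment and miner-revenue rules (run by the blockchain on the included bids); the miner receives at most the total payment and the remainder is burnt. Solitary-or-posted-price mechanism with reserve $r$: include the two highest bids and every other bid that is at least $r$. Every included bid that is at least $r$ is confirmed, and the highest included bid is always confirmed (even if below $r$); all other bids are unconfirmed. Let $b_2$ be the second-highest included bid (taken to be $0$ if it does not exist). Every confirmed bid pays $\min(b_2,r)$; the miner is paid $\min(b_2,r)$; the remaining payment is burnt. Strategic players: a user, the miner, or the miner with some users; they may have users bid untruthfully after seeing all bids, inject fake bids (true value $0$), and (if the miner is involved) include any set of available bids. Weak ($1$-strict) utility: miner revenue (if the miner is in the player) plus $v-p$ for each confirmed transaction of the player (true value $v$, payment $p$), minus $(b-v)$ for each unconfirmed transaction of the player with bid $b>v$. Weak UIC: with an honest miner, each user's weak utility is maximized by truthful bidding without fake bids, whatever the other bids. Weak MIC: the miner's weak utility is maximized by honestly following the inclusion rule, whatever the bids. $c$-weak-SCP: for every coalition of the miner with between $1$ and $c$ users, joint weak utility is maximized by truthful bidding and honest miner behavior, whatever the other bids. *)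

theory Defs
  imports Complex_Main
begin

text \<open>A bid profile is a list of bids; positions in the list identify transactions.
  The position order is only used for tie-breaking among equal bids.\<close>

record tfm =
  incl_rule :: "real list \<Rightarrow> nat set"
  conf_rule :: "real list \<Rightarrow> nat set \<Rightarrow> nat \<Rightarrow> bool" \<comment> \<open>bids, included positions, position\<close>
  pay_rule  :: "real list \<Rightarrow> nat set \<Rightarrow> nat \<Rightarrow> real"
  rev_rule  :: "real list \<Rightarrow> nat set \<Rightarrow> real"

definition outranks :: "real list \<Rightarrow> nat \<Rightarrow> nat \<Rightarrow> bool" where
  "outranks bs k j \<longleftrightarrow> bs ! k > bs ! j \<or> (bs ! k = bs ! j \<and> k < j)"

definition second_bid :: "real list \<Rightarrow> nat set \<Rightarrow> real" where
  "second_bid bs I = (if card I \<ge> 2 then rev (sort (map (\<lambda>j. bs ! j) (sorted_list_of_set I))) ! 1 else 0)"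

definition sopp_price :: "real \<Rightarrow> real list \<Rightarrow> nat set \<Rightarrow> real" where
  "sopp_price r bs I = min (second_bid bs I) r"

definition sopp :: "real \<Rightarrow> tfm" where
  "sopp r = \<lparr>
     incl_rule = (\<lambda>bs. {j. j < length bs \<and>
                          (card {k. k < length bs \<and> outranks bs k j} < 2 \<or> bs ! j \<ge> r)}),
     conf_rule = (\<lambda>bs I j. j \<in> I \<and> (bs ! j \<ge> r \<or> (\<forall>k\<in>I. \<not> outranks bs k j))),
     pay_rule  = (\<lambda>bs I j. sopp_price r bs I),
     rev_rule  = (\<lambda>bs I. sopp_price r bs I) \<rparr>"

text \<open>Owner tags: a bid of a user outside the strategic player, of the i-th user of the
  strategic player, or a fake bid injected by the strategic player (true value 0).\<close>
datatype tag = Other | Member nat | Fake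

type_synonym profile = "(real \<times> tag) list"

definition bids :: "profile \<Rightarrow> real list" where
  "bids P = map fst P"

definition true_val :: "real list \<Rightarrow> tag \<Rightarrow> real" where
  "true_val vs t = (case t of Member i \<Rightarrow> vs ! i | _ \<Rightarrow> 0)"

text \<open>Weak (1-strict) utility of the strategic player whose users have values vs,
  with miner flag m, when the included set is I.\<close>
definition weak_util :: "tfm \<Rightarrow> bool \<Rightarrow> real list \<Rightarrow> profile \<Rightarrow> nat set \<Rightarrow> real" where
  "weak_util M m vs P I =
     (if m then rev_rule M (bids P) I else 0) +
     (\<Sum>j\<in>{j. j < length P \<and> snd (P ! j) \<noteq> Other}.
        (let b = fst (P ! j); v = true_val vs (snd (P ! j)) in
         if conf_rule M (bids P) I j then v - pay_rule M (bids P) I j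
         else if b > v then - (b - v) else 0))"

definition honest_profile :: "real list \<Rightarrow> profile \<Rightarrow> bool" where
  "honest_profile vs P \<longleftrightarrow>
     (\<forall>x\<in>set P. fst x \<ge> 0 \<and> snd x \<noteq> Fake \<and>
        (\<forall>i. snd x = Member i \<longrightarrow> i < length vs \<and> fst x = vs ! i)) \<and>
     (\<forall>i<length vs. card {j. j < length P \<and> snd (P ! j) = Member i} = 1)"

definition dev_profile :: "real list \<Rightarrow> profile \<Rightarrow> bool" where
  "dev_profile vs P \<longleftrightarrow>
     (\<forall>x\<in>set P. fst x \<ge> 0 \<and> (\<forall>i. snd x = Member i \<longrightarrow> i < length vs)) \<and>
     (\<forall>i<length vs. card {j. j < length P \<and> snd (P ! j) = Member i} \<le> 1)"

definition same_others :: "profile \<Rightarrow> profile \<Rightarrow> bool" where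
  "same_others P Q \<longleftrightarrow> map fst (filter (\<lambda>x. snd x = Other) P) = map fst (filter (\<lambda>x. snd x = Other) Q)"

definition no_gain :: "tfm \<Rightarrow> bool \<Rightarrow> real list \<Rightarrow> bool" where
  "no_gain M m vs \<longleftrightarrow>
     (\<forall>P Q I. honest_profile vs P \<and> dev_profile vs Q \<and> same_others P Q \<and>
        (if m then I \<subseteq> {..<length Q} else I = incl_rule M (bids Q)) \<longrightarrow>
        weak_util M m vs Q I \<le> weak_util M m vs P (incl_rule M (bids P)))"

definition weak_UIC :: "tfm \<Rightarrow> bool" where
  "weak_UIC M \<longleftrightarrow> (\<forall>v::real. v \<ge> 0 \<longrightarrow> no_gain M False [v])"

definition weak_MIC :: "tfm \<Rightarrow> bool" where
  "weak_MIC M \<longleftrightarrow> no_gain M True []"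

definition weak_SCP :: "nat \<Rightarrow> tfm \<Rightarrow> bool" where
  "weak_SCP c M \<longleftrightarrow>
     (\<forall>vs. 1 \<le> length vs \<and> length vs \<le> c \<and> (\<forall>v\<in>set vs. v \<ge> 0) \<longrightarrow> no_gain M True vs)"

end

theory Submission
  imports Defs
begin

text \<open>
  Under honest play every confirmed bid pays p = min(s, r) \<le> its bid, where s is the second-highest
  bid; since the two highest bids are always included, p \<ge> min(t, r) whenever two bids reach t.
  So the honest utility of a coalition (with the miner) is at least p, at least each member's
  value, and at least r plus the total excess \<Sum> max(0, v_i - r) when two bids reach r.

  Against a deviation whose second included bid is s': if s' < r, at most one bid is confirmed,
  so the coalition collects at most one member's value, or at most s' -- and then two bids reaching
  s' are either overbids of the coalition or bids of outsiders, which force p \<ge> s'.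
  If s' \<ge> r, the price is r and a member gains at most v - r; either two honest bids reach r, or
  only one member has value above r and the bound collapses to that value.

  A single user can only gain if its own bid is confirmed in the deviation (confirmed fake bids
  only cost it). Then every outsider's bid, capped at r, lies below the deviation price, hence
  so does the honest price, and so does the user's value whenever its honest bid is not confirmed.
\<close>

lemma two_le_card_iff: "2 \<le> card A \<longleftrightarrow> finite A \<and> (\<exists>a\<in>A. \<exists>b\<in>A. a \<noteq> b)"
proof (cases "finite A")
  case True
  then show ?thesis using card_le_Suc0_iff_eq[OF True] by (auto simp: not_le[symmetric])
qed simp

lemma sum_le_single:
  fixes f :: "'a \<Rightarrow> 'b::ordered_comm_monoid_add"
  assumes "finite K" "j \<in> K" "\<forall>k\<in>K - {j}. f k \<le> 0"
  shows "sum f K \<le> f j"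
  using add_left_mono[OF sum_nonpos[of "K - {j}" f], of "f j"] assms by (simp add: sum.remove)

lemma outranks_irrefl: "\<not> outranks bs j j"
  by (auto simp: outranks_def)

lemma outranks_total: "j \<noteq> k \<Longrightarrow> outranks bs j k \<or> outranks bs k j"
  by (auto simp: outranks_def)

lemma outranks_imp_le: "outranks bs k j \<Longrightarrow> bs ! j \<le> bs ! k"
  by (auto simp: outranks_def)

lemma le_if_not_outranks: "\<not> outranks bs k j \<Longrightarrow> bs ! k \<le> bs ! j"
  by (auto simp: outranks_def)

lemma outranks_trans: "outranks bs a b \<Longrightarrow> outranks bs b c \<Longrightarrow> outranks bs a c"
  by (auto simp: outranks_def)

lemma exists_unoutranked:
  assumes "finite S" "S \<noteq> {}"
  shows "\<exists>k\<in>S. \<forall>k'\<in>S. \<not> outranks bs k' k"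
proof -
  define m where "m = Max ((\<lambda>j. bs ! j) ` S)"
  define T where "T = {k\<in>S. bs ! k = m}"
  have "m \<in> (\<lambda>j. bs ! j) ` S" using assms unfolding m_def by (intro Max_in) auto
  then have "T \<noteq> {}" unfolding T_def by auto
  moreover have "finite T" using assms unfolding T_def by auto
  ultimately have kT: "Min T \<in> T" by (rule Min_in[rotated])
  have "\<not> outranks bs k' (Min T)" if "k' \<in> S" for k'
  proof -
    have "bs ! k' \<le> m" unfolding m_def using assms that by (intro Max_ge) auto
    moreover have "bs ! k' = m \<Longrightarrow> Min T \<le> k'" using \<open>finite T\<close> that T_def by (intro Min_le) auto
    ultimately show ?thesis using kT by (auto simp: outranks_def T_def)
  qed
  then show ?thesis using kT T_def by auto
qed

section \<open>The second-highest bid\<close>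

lemma length_filter_sorted_bids:
  assumes "finite I"
  shows "length (filter R (sort (map (\<lambda>j. bs ! j) (sorted_list_of_set I)))) = card {j\<in>I. R (bs ! j)}"
proof -
  have "length (filter R (sort (map (\<lambda>j. bs ! j) (sorted_list_of_set I))))
      = length (filter (R \<circ> (\<lambda>j. bs ! j)) (sorted_list_of_set I))"
    by (simp add: filter_sort filter_map)
  also have "\<dots> = card ({x. (R \<circ> (\<lambda>j. bs ! j)) x} \<inter> set (sorted_list_of_set I))"
    by (simp add: distinct_length_filter)
  also have "\<dots> = card {j\<in>I. R (bs ! j)}" using assms by (simp add: Int_def conj_commute)
  finally show ?thesis .
qed

lemma second_bid_characterization:
  assumes "finite I" "2 \<le> card I"
  shows "2 \<le> card {j\<in>I. second_bid bs I \<le> bs ! j}"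
    and "card {j\<in>I. second_bid bs I < bs ! j} \<le> 1"
proof -
  define L where "L = sort (map (\<lambda>j. bs ! j) (sorted_list_of_set I))"
  define n where "n = card I"
  have lenL: "length L = n" unfolding L_def n_def using assms by simp
  have sL: "sorted L" unfolding L_def by simp
  have s: "second_bid bs I = L ! (n - 2)"
    unfolding second_bid_def L_def[symmetric] n_def[symmetric] using assms lenL
    by (simp add: n_def rev_nth numeral_2_eq_2 Suc_diff_Suc)
  have count: "card {j\<in>I. R (bs ! j)} = card {t. t < n \<and> R (L ! t)}" for R
    using length_filter_sorted_bids[OF assms(1), of R bs] length_filter_conv_card[of R L]
    unfolding L_def[symmetric] lenL by simp
  have "{n - 2, n - 1} \<subseteq> {t. t < n \<and> second_bid bs I \<le> L ! t}"
    using assms lenL s n_def by (auto intro!: sorted_nth_mono[OF sL])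
  then have "card {n - 2, n - 1} \<le> card {t. t < n \<and> second_bid bs I \<le> L ! t}"
    by (intro card_mono) auto
  moreover have "card {n - 2, n - 1} = 2" using assms n_def by auto
  ultimately show "2 \<le> card {j\<in>I. second_bid bs I \<le> bs ! j}" using count by simp
  have "{t. t < n \<and> second_bid bs I < L ! t} \<subseteq> {n - 1}"
  proof (rule subsetI, rule ccontr)
    fix t assume t: "t \<in> {t. t < n \<and> second_bid bs I < L ! t}" and "t \<notin> {n - 1}"
    then have "L ! t \<le> L ! (n - 2)" using lenL by (intro sorted_nth_mono[OF sL]) auto
    then show False using t s by auto
  qed
  then have "card {t. t < n \<and> second_bid bs I < L ! t} \<le> 1"
    using card_mono[of "{n - 1}"] by fastforce
  then show "card {j\<in>I. second_bid bs I < bs ! j} \<le> 1" using count by simp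
qed

lemma second_bid_eq_0: "card I < 2 \<Longrightarrow> second_bid bs I = 0"
  by (simp add: second_bid_def)

lemma second_bid_witnesses:
  assumes "finite I" "2 \<le> card I"
  obtains a b where "a \<in> I" "b \<in> I" "a \<noteq> b" "second_bid bs I \<le> bs ! a" "second_bid bs I \<le> bs ! b"
  using second_bid_characterization(1)[OF assms, of bs] unfolding two_le_card_iff by blast

lemma second_bid_ge_min:
  assumes "finite I" "a \<in> I" "b \<in> I" "a \<noteq> b"
  shows "min (bs ! a) (bs ! b) \<le> second_bid bs I"
proof (rule ccontr)
  assume "\<not> ?thesis"
  then have "2 \<le> card {j\<in>I. second_bid bs I < bs ! j}"
    using assms unfolding two_le_card_iff by (auto simp: not_le)
  moreover have "2 \<le> card I" using assms unfolding two_le_card_iff by auto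
  ultimately show False using second_bid_characterization(2)[OF assms(1), of bs] by simp
qed

lemma second_bid_nonneg:
  assumes "finite I" "\<forall>k\<in>I. 0 \<le> bs ! k"
  shows "0 \<le> second_bid bs I"
proof (cases "2 \<le> card I")
  case True
  show ?thesis
  proof (rule ccontr)
    assume "\<not> ?thesis"
    then have "{j\<in>I. second_bid bs I < bs ! j} = I" using assms(2) by fastforce
    then show False using second_bid_characterization(2)[OF assms(1) True, of bs] True by simp
  qed
qed (simp add: second_bid_eq_0)

lemma second_bid_le_unoutranked:
  assumes "finite I" "j \<in> I" "\<forall>k\<in>I. \<not> outranks bs k j" "\<forall>k\<in>I. 0 \<le> bs ! k"
  shows "second_bid bs I \<le> bs ! j"
proof (cases "2 \<le> card I")
  case True
  then obtain c where "c \<in> I" "second_bid bs I \<le> bs ! c"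
    using second_bid_witnesses[OF assms(1)] by metis
  then show ?thesis using assms(3) le_if_not_outranks order_trans by blast
qed (use assms in \<open>simp add: second_bid_eq_0\<close>)

abbreviation included :: "real \<Rightarrow> real list \<Rightarrow> nat set" where
  "included r bs \<equiv> incl_rule (sopp r) bs"

abbreviation confirmed :: "real \<Rightarrow> real list \<Rightarrow> nat set \<Rightarrow> nat \<Rightarrow> bool" where
  "confirmed r \<equiv> conf_rule (sopp r)"

lemma included_eq:
  "included r bs = {j. j < length bs \<and> (card {k. k < length bs \<and> outranks bs k j} < 2 \<or> r \<le> bs ! j)}"
  by (simp add: sopp_def)

lemma confirmed_iff: "confirmed r bs I j \<longleftrightarrow> j \<in> I \<and> (r \<le> bs ! j \<or> (\<forall>k\<in>I. \<not> outranks bs k j))"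
  by (simp add: sopp_def)

lemma included_subset: "included r bs \<subseteq> {..<length bs}"
  by (auto simp: included_eq)

lemma finite_included: "finite (included r bs)"
  using finite_subset[OF included_subset] by blast

lemma excluded_outranked_twice:
  assumes "j < length bs" "j \<notin> included r bs"
  shows "bs ! j < r \<and> (\<exists>k1\<in>included r bs. \<exists>k2\<in>included r bs.
           k1 \<noteq> k2 \<and> outranks bs k1 j \<and> outranks bs k2 j)"
proof -
  define Os where "Os = {k. k < length bs \<and> outranks bs k j}"
  have c: "2 \<le> card Os" and lt: "bs ! j < r" using assms unfolding Os_def included_eq by auto
  have fO: "finite Os" unfolding Os_def by auto
  have "Os \<noteq> {}" using c by auto
  then obtain k1 where k1: "k1 \<in> Os" "\<forall>k'\<in>Os. \<not> outranks bs k' k1"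
    using exists_unoutranked[OF fO] by blast
  have "card (Os - {k1}) \<noteq> 0" using c k1(1) fO by (simp add: card_Diff_singleton)
  then have "Os - {k1} \<noteq> {}" by (metis card.empty)
  then obtain k2 where k2: "k2 \<in> Os - {k1}" "\<forall>k'\<in>Os - {k1}. \<not> outranks bs k' k2"
    using exists_unoutranked[of "Os - {k1}"] fO by blast
  have "{k. k < length bs \<and> outranks bs k k1} = {}"
    using k1 unfolding Os_def by (auto dest: outranks_trans)
  then have i1: "k1 \<in> included r bs" using k1 unfolding included_eq Os_def by (simp del: Collect_empty_eq)
  have "{k. k < length bs \<and> outranks bs k k2} \<subseteq> {k1}"
    using k2 unfolding Os_def by (auto dest: outranks_trans)
  then have "card {k. k < length bs \<and> outranks bs k k2} \<le> card {k1}"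
    by (intro card_mono) auto
  then have i2: "k2 \<in> included r bs" using k2 unfolding included_eq Os_def by simp
  show ?thesis using i1 i2 k1(1) k2(1) lt unfolding Os_def by blast
qed

lemma excluded_le_second_bid:
  assumes "j < length bs" "j \<notin> included r bs"
  shows "bs ! j \<le> second_bid bs (included r bs)"
proof -
  obtain k1 k2 where k: "k1 \<in> included r bs" "k2 \<in> included r bs" "k1 \<noteq> k2"
    and "outranks bs k1 j" "outranks bs k2 j"
    using excluded_outranked_twice[OF assms] by blast
  then have "bs ! j \<le> min (bs ! k1) (bs ! k2)" using outranks_imp_le by simp
  also have "\<dots> \<le> second_bid bs (included r bs)" using second_bid_ge_min[OF finite_included k] .
  finally show ?thesis .
qed

lemma second_bid_included_ge_min:
  assumes "a < length bs" "b < length bs" "a \<noteq> b"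
  shows "min (bs ! a) (bs ! b) \<le> second_bid bs (included r bs)"
proof (cases "a \<in> included r bs \<and> b \<in> included r bs")
  case True
  then show ?thesis using second_bid_ge_min[OF finite_included] assms(3) by blast
next
  case False
  then show ?thesis using excluded_le_second_bid assms by fastforce
qed

lemma unconfirmed_included:
  assumes "j < length bs" "\<not> confirmed r bs (included r bs) j"
  shows "bs ! j < r \<and> (\<exists>k<length bs. k \<noteq> j \<and> bs ! j \<le> bs ! k)"
proof (cases "j \<in> included r bs")
  case True
  then obtain k where "k \<in> included r bs" "outranks bs k j" "bs ! j < r"
    using assms(2) unfolding confirmed_iff by auto
  then show ?thesis using included_subset outranks_irrefl outranks_imp_le by blast
next
  case False
  then show ?thesis using excluded_outranked_twice[OF assms(1)] included_subset
    outranks_irrefl outranks_imp_le by blast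
qed

lemma confirmed_unique:
  assumes "finite I" "second_bid bs I < r" "confirmed r bs I j" "confirmed r bs I j'"
  shows "j = j'"
proof (rule ccontr)
  have no_outranking: False if "confirmed r bs I a" "confirmed r bs I b" "outranks bs a b" for a b
  proof -
    have "a \<noteq> b" using that(3) outranks_irrefl by metis
    moreover have "a \<in> I" "b \<in> I" "r \<le> bs ! b" using that unfolding confirmed_iff by auto
    ultimately show False
      using second_bid_ge_min[OF assms(1), of a b bs] outranks_imp_le[OF that(3)] assms(2) by linarith
  qed
  assume "j \<noteq> j'"
  then show False using outranks_total no_outranking assms(3,4) by metis
qed

lemma sopp_price_le_reserve: "sopp_price r bs I \<le> r"
  by (simp add: sopp_price_def)

lemma sopp_price_nonneg:
  assumes "finite I" "\<forall>k\<in>I. 0 \<le> bs ! k" "0 \<le> r"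
  shows "0 \<le> sopp_price r bs I"
  using second_bid_nonneg[OF assms(1,2)] assms(3) by (simp add: sopp_price_def)

lemma sopp_price_le_confirmed:
  assumes "finite I" "\<forall>k\<in>I. 0 \<le> bs ! k" "confirmed r bs I j"
  shows "sopp_price r bs I \<le> bs ! j"
  using assms second_bid_le_unoutranked[OF assms(1)] unfolding confirmed_iff sopp_price_def
  by fastforce

lemma sopp_price_included_ge:
  assumes "a < length bs" "b < length bs" "a \<noteq> b" "t \<le> bs ! a" "t \<le> bs ! b"
  shows "min t r \<le> sopp_price r bs (included r bs)"
  using second_bid_included_ge_min[OF assms(1-3), of r] assms(4,5) by (simp add: sopp_price_def)

lemma sopp_price_included_ge_others:
  assumes "confirmed r bs (included r bs) u" "c < length bs" "c \<noteq> u"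
  shows "min (bs ! c) r \<le> sopp_price r bs (included r bs)"
proof (cases "bs ! c \<le> second_bid bs (included r bs)")
  case True
  then show ?thesis by (simp add: sopp_price_def)
next
  case False
  have u: "u < length bs" "u \<in> included r bs" using assms(1) included_subset unfolding confirmed_iff by auto
  with False have "bs ! u \<le> second_bid bs (included r bs)" "bs ! u < bs ! c"
    using second_bid_included_ge_min[OF assms(2) u(1) assms(3), of r] by linarith+
  moreover have "c \<in> included r bs" using False excluded_le_second_bid assms(2) by blast
  ultimately have "r \<le> bs ! u"
    using assms(1) unfolding confirmed_iff outranks_def by auto
  then show ?thesis using \<open>bs ! u \<le> second_bid bs (included r bs)\<close> by (simp add: sopp_price_def)
qed

lemma sopp_price_included_le:
  assumes "\<forall>j<length bs. j \<noteq> u \<longrightarrow> min (bs ! j) r \<le> t" "0 \<le> t"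
  shows "sopp_price r bs (included r bs) \<le> t"
proof (cases "2 \<le> card (included r bs)")
  case True
  then obtain a b where "a \<in> included r bs" "b \<in> included r bs" "a \<noteq> b"
    "second_bid bs (included r bs) \<le> bs ! a" "second_bid bs (included r bs) \<le> bs ! b"
    using second_bid_witnesses[OF finite_included] by metis
  then obtain c where "c < length bs" "c \<noteq> u" "second_bid bs (included r bs) \<le> bs ! c"
    using included_subset by blast
  then show ?thesis using assms(1) by (fastforce simp: sopp_price_def)
qed (use assms in \<open>simp add: second_bid_eq_0 sopp_price_def\<close>)

lemma unconfirmed_le_sopp_price:
  assumes "j < length bs" "\<not> confirmed r bs (included r bs) j"
  shows "bs ! j \<le> sopp_price r bs (included r bs)"
proof -
  obtain k where "bs ! j < r" "k < length bs" "k \<noteq> j" "bs ! j \<le> bs ! k"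
    using unconfirmed_included[OF assms] by blast
  then show ?thesis using sopp_price_included_ge[OF assms(1), of k "bs ! j" r] by simp
qed

lemma length_bids [simp]: "length (bids Q) = length Q"
  by (simp add: bids_def)

lemma bids_nth [simp]: "j < length Q \<Longrightarrow> bids Q ! j = fst (Q ! j)"
  by (simp add: bids_def)

definition coalition :: "profile \<Rightarrow> nat set" where
  "coalition Q = {j. j < length Q \<and> snd (Q ! j) \<noteq> Other}"

definition val :: "real list \<Rightarrow> profile \<Rightarrow> nat \<Rightarrow> real" where
  "val vs Q j = true_val vs (snd (Q ! j))"

definition gain :: "real \<Rightarrow> real list \<Rightarrow> profile \<Rightarrow> nat set \<Rightarrow> nat \<Rightarrow> real" where
  "gain r vs Q I j =
     (if confirmed r (bids Q) I j then val vs Q j - sopp_price r (bids Q) I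
      else if val vs Q j < bids Q ! j then val vs Q j - bids Q ! j else 0)"

lemma finite_coalition: "finite (coalition Q)"
  by (simp add: coalition_def)

lemma weak_util_sopp:
  "weak_util (sopp r) m vs Q I =
     (if m then sopp_price r (bids Q) I else 0) + (\<Sum>j\<in>coalition Q. gain r vs Q I j)"
  unfolding weak_util_def coalition_def
  by (auto simp: sopp_def gain_def val_def Let_def intro!: sum.cong)

lemma gain_confirmed: "confirmed r (bids Q) I j \<Longrightarrow> gain r vs Q I j = val vs Q j - sopp_price r (bids Q) I"
  by (simp add: gain_def)

lemma gain_unconfirmed:
  "\<not> confirmed r (bids Q) I j \<Longrightarrow> gain r vs Q I j \<le> 0 \<and> gain r vs Q I j \<le> val vs Q j - bids Q ! j"
  by (simp add: gain_def)

lemma gain_le_excess: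
  assumes "sopp_price r (bids Q) I = r"
  shows "gain r vs Q I j \<le> max 0 (val vs Q j - r)"
  using assms by (auto simp: gain_def)

definition members :: "profile \<Rightarrow> nat set" where
  "members Q = {j. j < length Q \<and> (\<exists>i. snd (Q ! j) = Member i)}"

definition member_index :: "profile \<Rightarrow> nat \<Rightarrow> nat" where
  "member_index Q j = (case snd (Q ! j) of Member i \<Rightarrow> i | _ \<Rightarrow> 0)"

lemma dev_profile_if_honest: "honest_profile vs P \<Longrightarrow> dev_profile vs P"
  unfolding honest_profile_def dev_profile_def by auto

lemma dev_profile_bids_nonneg: "dev_profile vs Q \<Longrightarrow> j < length Q \<Longrightarrow> 0 \<le> bids Q ! j"
  unfolding dev_profile_def by auto

lemma dev_profile_member_lt:
  "dev_profile vs Q \<Longrightarrow> j < length Q \<Longrightarrow> snd (Q ! j) = Member i \<Longrightarrow> i < length vs"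
  unfolding dev_profile_def by (metis nth_mem)

lemma dev_profile_member_unique:
  assumes "dev_profile vs Q" "a < length Q" "b < length Q" "snd (Q ! a) = Member i" "snd (Q ! b) = Member i"
  shows "a = b"
proof -
  have "card {j. j < length Q \<and> snd (Q ! j) = Member i} \<le> 1"
    using assms dev_profile_member_lt unfolding dev_profile_def by blast
  then show ?thesis using assms(2-) card_le_Suc0_iff_eq[of "{j. j < length Q \<and> snd (Q ! j) = Member i}"]
    by auto
qed

lemma val_member: "j \<in> members Q \<Longrightarrow> val vs Q j = vs ! member_index Q j"
  by (auto simp: members_def val_def member_index_def true_val_def)

lemma inj_on_member_index: "dev_profile vs Q \<Longrightarrow> inj_on (member_index Q) (members Q)"
  by (rule inj_onI) (auto simp: members_def member_index_def intro: dev_profile_member_unique)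

lemma member_index_lt: "dev_profile vs Q \<Longrightarrow> j \<in> members Q \<Longrightarrow> member_index Q j < length vs"
  by (auto simp: members_def member_index_def dest: dev_profile_member_lt)

lemma sum_val_le:
  fixes f :: "real \<Rightarrow> real"
  assumes "dev_profile vs Q" "f 0 = 0" "\<And>x. 0 \<le> f x"
  shows "(\<Sum>j\<in>coalition Q. f (val vs Q j)) \<le> (\<Sum>i<length vs. f (vs ! i))"
proof -
  have "members Q \<subseteq> coalition Q" by (auto simp: members_def coalition_def)
  moreover have "\<forall>j\<in>coalition Q - members Q. f (val vs Q j) = 0"
    using assms(2) by (auto simp: members_def coalition_def val_def true_val_def split: tag.split)
  ultimately have "(\<Sum>j\<in>coalition Q. f (val vs Q j)) = (\<Sum>j\<in>members Q. f (val vs Q j))"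
    by (rule sum.mono_neutral_right[OF finite_coalition])
  also have "\<dots> = (\<Sum>j\<in>members Q. f (vs ! member_index Q j))"
    by (intro sum.cong) (simp_all add: val_member)
  also have "\<dots> = (\<Sum>i\<in>member_index Q ` members Q. f (vs ! i))"
    by (simp add: sum.reindex[OF inj_on_member_index[OF assms(1)]])
  also have "\<dots> \<le> (\<Sum>i<length vs. f (vs ! i))"
    using member_index_lt[OF assms(1)] assms(3) by (intro sum_mono2) auto
  finally show ?thesis .
qed

lemma honest_member:
  assumes "honest_profile vs P" "j \<in> coalition P"
  obtains i where "i < length vs" "snd (P ! j) = Member i" "fst (P ! j) = vs ! i"
proof -
  have "P ! j \<in> set P" "snd (P ! j) \<noteq> Other" using assms(2) by (auto simp: coalition_def)
  then show ?thesis using assms(1) that unfolding honest_profile_def by (cases "snd (P ! j)") auto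
qed

lemma honest_val_eq_bid: "honest_profile vs P \<Longrightarrow> j \<in> coalition P \<Longrightarrow> val vs P j = bids P ! j"
  by (erule honest_member) (auto simp: val_def true_val_def coalition_def)

lemma honest_coalition_eq_members: "honest_profile vs P \<Longrightarrow> coalition P = members P"
  unfolding members_def by (auto elim: honest_member simp: coalition_def)

lemma honest_position:
  assumes "honest_profile vs P" "i < length vs"
  obtains u where "u < length P" "snd (P ! u) = Member i" "bids P ! u = vs ! i"
proof -
  have "card {j. j < length P \<and> snd (P ! j) = Member i} = 1"
    using assms unfolding honest_profile_def by blast
  then obtain u where "{j. j < length P \<and> snd (P ! j) = Member i} = {u}" by (rule card_1_singletonE)
  moreover have "fst (P ! u) = vs ! i" if "u < length P" "snd (P ! u) = Member i"
    using assms(1) that nth_mem unfolding honest_profile_def by blast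
  ultimately show ?thesis using that by auto
qed

lemma sum_val_honest:
  assumes "honest_profile vs P"
  shows "(\<Sum>j\<in>coalition P. f (val vs P j)) = (\<Sum>i<length vs. f (vs ! i))"
proof -
  have dev: "dev_profile vs P" by (rule dev_profile_if_honest[OF assms])
  have "member_index P ` members P = {..<length vs}"
  proof
    show "{..<length vs} \<subseteq> member_index P ` members P"
    proof
      fix i assume "i \<in> {..<length vs}"
      then obtain u where "u < length P" "snd (P ! u) = Member i" using honest_position[OF assms] by blast
      then show "i \<in> member_index P ` members P" by (force simp: members_def member_index_def)
    qed
  qed (use member_index_lt[OF dev] in blast)
  moreover have "(\<Sum>j\<in>coalition P. f (val vs P j)) = (\<Sum>j\<in>members P. f (vs ! member_index P j))"
    using val_member by (simp add: honest_coalition_eq_members[OF assms])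
  ultimately show ?thesis
    using sum.reindex[OF inj_on_member_index[OF dev], of "\<lambda>i. f (vs ! i)"] by (simp add: comp_def)
qed

lemma same_others_count:
  assumes "same_others P Q"
  shows "card {j. j < length P \<and> snd (P ! j) = Other \<and> R (fst (P ! j))}
       = card {j. j < length Q \<and> snd (Q ! j) = Other \<and> R (fst (Q ! j))}"
proof -
  have count: "card {j. j < length X \<and> snd (X ! j) = Other \<and> R (fst (X ! j))}
      = length (filter R (map fst (filter (\<lambda>x. snd x = Other) X)))" for X :: profile
    by (simp add: filter_map length_filter_conv_card comp_def conj_commute)
  show ?thesis using assms unfolding count same_others_def by simp
qed

lemma same_others_bid:
  assumes "same_others P Q" "j < length P" "snd (P ! j) = Other"
  obtains c where "c < length Q" "snd (Q ! c) = Other" "fst (Q ! c) = fst (P ! j)"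
proof -
  have "fst (P ! j) \<in> set (map fst (filter (\<lambda>x. snd x = Other) P))"
    using assms(2,3) nth_mem by fastforce
  then have "fst (P ! j) \<in> set (map fst (filter (\<lambda>x. snd x = Other) Q))"
    using assms(1) by (simp only: same_others_def)
  then obtain x where "x \<in> set Q" "snd x = Other" "fst x = fst (P ! j)" by auto
  then show ?thesis using that by (metis in_set_conv_nth)
qed

lemma same_others_two_bids:
  assumes "same_others P Q" "a < length Q" "b < length Q" "a \<noteq> b"
    "snd (Q ! a) = Other" "snd (Q ! b) = Other" "t \<le> bids Q ! a" "t \<le> bids Q ! b"
  obtains a' b' where "a' < length P" "b' < length P" "a' \<noteq> b'" "t \<le> bids P ! a'" "t \<le> bids P ! b'"
proof -
  have "2 \<le> card {j. j < length Q \<and> snd (Q ! j) = Other \<and> t \<le> fst (Q ! j)}"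
    using assms(2-) unfolding two_le_card_iff by auto
  then have "2 \<le> card {j. j < length P \<and> snd (P ! j) = Other \<and> t \<le> fst (P ! j)}"
    using same_others_count[OF assms(1)] by simp
  then show ?thesis using that unfolding two_le_card_iff by auto
qed

section \<open>The honest outcome\<close>

locale honest_setting =
  fixes r :: real and vs :: "real list" and P :: profile
  assumes reserve_pos: "0 < r"
    and honest: "honest_profile vs P"
begin

abbreviation "honest_price \<equiv> sopp_price r (bids P) (included r (bids P))"
abbreviation "honest_gain \<equiv> gain r vs P (included r (bids P))"
abbreviation "honest_util m \<equiv> weak_util (sopp r) m vs P (included r (bids P))"
abbreviation "excess \<equiv> (\<Sum>i<length vs. max 0 (vs ! i - r))"

lemma honest_bids_nonneg: "\<forall>k\<in>included r (bids P). 0 \<le> bids P ! k"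
  using included_subset dev_profile_bids_nonneg[OF dev_profile_if_honest[OF honest]] by fastforce

lemma honest_price_nonneg: "0 \<le> honest_price"
  using sopp_price_nonneg[OF finite_included honest_bids_nonneg] reserve_pos by simp

lemma honest_gain_nonneg:
  assumes "j \<in> coalition P"
  shows "0 \<le> honest_gain j"
proof (cases "confirmed r (bids P) (included r (bids P)) j")
  case True
  then show ?thesis
    using sopp_price_le_confirmed[OF finite_included honest_bids_nonneg True]
      honest_val_eq_bid[OF honest assms] by (simp add: gain_confirmed)
qed (use honest_val_eq_bid[OF honest assms] in \<open>simp add: gain_def\<close>)

lemma honest_util_eq: "honest_util m = (if m then honest_price else 0) + (\<Sum>j\<in>coalition P. honest_gain j)"
  by (rule weak_util_sopp)

lemma honest_util_nonneg: "0 \<le> honest_util m"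
  using honest_price_nonneg honest_gain_nonneg by (simp add: honest_util_eq sum_nonneg)

lemma price_plus_gain_le_honest_util:
  assumes "j \<in> coalition P"
  shows "honest_price + honest_gain j \<le> honest_util True"
  using member_le_sum[OF assms, of honest_gain] honest_gain_nonneg finite_coalition
  by (simp add: honest_util_eq)

lemma honest_price_le_util: "honest_price \<le> honest_util True"
  using honest_gain_nonneg by (simp add: honest_util_eq sum_nonneg)

lemma value_le_honest_util:
  assumes "i < length vs"
  shows "vs ! i \<le> honest_util True"
proof -
  obtain u where u: "u < length P" "snd (P ! u) = Member i" "bids P ! u = vs ! i"
    using honest_position[OF honest assms] by blast
  then have coal: "u \<in> coalition P" by (simp add: coalition_def)
  show ?thesis
  proof (cases "confirmed r (bids P) (included r (bids P)) u")
    case True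
    then show ?thesis using price_plus_gain_le_honest_util[OF coal] u(3)
      honest_val_eq_bid[OF honest coal] by (simp add: gain_confirmed)
  next
    case False
    then show ?thesis using unconfirmed_le_sopp_price[of u "bids P" r] u honest_price_le_util by simp
  qed
qed

lemma val_le_honest_util:
  assumes "dev_profile vs Q" "j < length Q"
  shows "val vs Q j \<le> honest_util True"
  using assms dev_profile_member_lt value_le_honest_util honest_util_nonneg
  by (cases "snd (Q ! j)") (auto simp: val_def true_val_def)

lemma reserve_plus_excess_le_honest_util:
  assumes "a < length P" "b < length P" "a \<noteq> b" "r \<le> bids P ! a" "r \<le> bids P ! b"
  shows "r + excess \<le> honest_util True"
proof -
  have "r \<le> honest_price" using sopp_price_included_ge[of a "bids P" b r r] assms by simp
  then have price: "honest_price = r" using sopp_price_le_reserve by (intro antisym)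
  have "max 0 (val vs P j - r) \<le> honest_gain j" if j: "j \<in> coalition P" for j
  proof (cases "confirmed r (bids P) (included r (bids P)) j")
    case True
    then show ?thesis using sopp_price_le_confirmed[OF finite_included honest_bids_nonneg True]
      honest_val_eq_bid[OF honest j] price by (simp add: gain_confirmed)
  next
    case False
    moreover have "j < length (bids P)" using j by (simp add: coalition_def)
    ultimately have "bids P ! j < r" using unconfirmed_included by blast
    then show ?thesis using honest_gain_nonneg[OF j] honest_val_eq_bid[OF honest j] by simp
  qed
  then have "(\<Sum>j\<in>coalition P. max 0 (val vs P j - r)) \<le> (\<Sum>j\<in>coalition P. honest_gain j)"
    by (rule sum_mono)
  then have "excess \<le> (\<Sum>j\<in>coalition P. honest_gain j)"
    using sum_val_honest[OF honest, of "\<lambda>x. max 0 (x - r)"] by simp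
  then show ?thesis using price by (simp add: honest_util_eq)
qed

lemma min_plus_excess_le_honest_util:
  assumes "\<not> (\<exists>a<length P. \<exists>b<length P. a \<noteq> b \<and> r \<le> bids P ! a \<and> r \<le> bids P ! b)"
    and "x \<le> honest_util True"
  shows "min x r + excess \<le> honest_util True"
proof (cases "\<exists>i<length vs. r < vs ! i")
  case True
  then obtain i where i: "i < length vs" "r < vs ! i" by blast
  obtain u where u: "u < length P" "snd (P ! u) = Member i" "bids P ! u = vs ! i"
    using honest_position[OF honest i(1)] by blast
  have "vs ! i' \<le> r" if i': "i' < length vs" "i' \<noteq> i" for i'
  proof (rule ccontr)
    assume "\<not> vs ! i' \<le> r"
    moreover obtain u' where "u' < length P" "snd (P ! u') = Member i'" "bids P ! u' = vs ! i'"
      using honest_position[OF honest i'(1)] by blast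
    ultimately show False using assms(1) u i i'(2) by force
  qed
  then have "excess = vs ! i - r" using i by (simp add: sum.remove[of _ i])
  then show ?thesis using value_le_honest_util[OF i(1)] by linarith
next
  case False
  then have "excess = 0" by (intro sum.neutral) auto
  then show ?thesis using assms(2) by linarith
qed

end

section \<open>Deviations of a coalition containing the miner\<close>

lemma sum_gain_le_excess_confirmed:
  assumes "sopp_price r (bids Q) I = r" "b \<in> coalition Q" "confirmed r (bids Q) I b"
  shows "r + (\<Sum>j\<in>coalition Q. gain r vs Q I j)
    \<le> min (val vs Q b) r + (\<Sum>j\<in>coalition Q. max 0 (val vs Q j - r))"
proof -
  have "(\<Sum>j\<in>coalition Q. gain r vs Q I j) = gain r vs Q I b + (\<Sum>j\<in>coalition Q - {b}. gain r vs Q I j)"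
    using assms(2) finite_coalition by (simp add: sum.remove)
  moreover have "(\<Sum>j\<in>coalition Q - {b}. gain r vs Q I j) \<le> (\<Sum>j\<in>coalition Q - {b}. max 0 (val vs Q j - r))"
    using gain_le_excess[OF assms(1)] by (rule sum_mono)
  moreover have "(\<Sum>j\<in>coalition Q. max 0 (val vs Q j - r))
      = max 0 (val vs Q b - r) + (\<Sum>j\<in>coalition Q - {b}. max 0 (val vs Q j - r))"
    using assms(2) finite_coalition by (simp add: sum.remove)
  moreover have "val vs Q b - max 0 (val vs Q b - r) = min (val vs Q b) r"
    by (simp add: min_def max_def)
  ultimately show ?thesis using gain_confirmed[OF assms(3), of vs] assms(1) by linarith
qed

locale scp_deviation = honest_setting +
  fixes Q :: profile and I :: "nat set"
  assumes deviating: "dev_profile vs Q"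
    and others_kept: "same_others P Q"
    and available: "I \<subseteq> {..<length Q}"
begin

abbreviation "dev_second \<equiv> second_bid (bids Q) I"
abbreviation "dev_price \<equiv> sopp_price r (bids Q) I"
abbreviation "dev_gain \<equiv> gain r vs Q I"
abbreviation "dev_util \<equiv> weak_util (sopp r) True vs Q I"

lemma finite_available: "finite I"
  using available finite_subset by blast

lemma dev_util_eq: "dev_util = dev_price + (\<Sum>j\<in>coalition Q. dev_gain j)"
  by (simp add: weak_util_sopp)

lemma two_others_honest_bids:
  assumes "a \<in> I" "b \<in> I" "a \<noteq> b" "a \<notin> coalition Q" "b \<notin> coalition Q"
    "t \<le> bids Q ! a" "t \<le> bids Q ! b"
  obtains a' b' where "a' < length P" "b' < length P" "a' \<noteq> b'" "t \<le> bids P ! a'" "t \<le> bids P ! b'"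
  using same_others_two_bids[OF others_kept, of a b t] assms available
  unfolding coalition_def by blast

lemma dev_util_le_honest_low_confirmed:
  assumes "dev_second < r" "j \<in> coalition Q" "confirmed r (bids Q) I j"
  shows "dev_util \<le> honest_util True"
proof -
  have "\<forall>k\<in>coalition Q - {j}. dev_gain k \<le> 0"
    using confirmed_unique[OF finite_available assms(1) assms(3)] gain_unconfirmed by blast
  then have "(\<Sum>k\<in>coalition Q. dev_gain k) \<le> dev_gain j"
    by (rule sum_le_single[OF finite_coalition assms(2)])
  then have "(\<Sum>k\<in>coalition Q. dev_gain k) \<le> val vs Q j - dev_price"
    using gain_confirmed[OF assms(3)] by simp
  moreover have "val vs Q j \<le> honest_util True"
    using val_le_honest_util[OF deviating] assms(2) by (simp add: coalition_def)
  ultimately show ?thesis by (simp add: dev_util_eq)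
qed

lemma dev_util_le_val_if_unconfirmed:
  assumes "\<forall>j\<in>coalition Q. \<not> confirmed r (bids Q) I j" "c \<in> coalition Q" "dev_price \<le> bids Q ! c"
  shows "dev_util \<le> val vs Q c"
proof -
  have "(\<Sum>j\<in>coalition Q. dev_gain j) \<le> dev_gain c"
    using assms(1,2) gain_unconfirmed by (intro sum_le_single[OF finite_coalition]) auto
  then show ?thesis using gain_unconfirmed[of r Q I c vs] assms by (simp add: dev_util_eq)
qed

lemma dev_util_le_honest_low:
  assumes "dev_second < r"
  shows "dev_util \<le> honest_util True"
proof (cases "\<exists>j\<in>coalition Q. confirmed r (bids Q) I j")
  case True
  then show ?thesis using dev_util_le_honest_low_confirmed assms by blast
next
  case unconfirmed: False
  have price: "dev_price = dev_second" using assms by (simp add: sopp_price_def)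
  have util_le: "dev_util \<le> dev_second"
    using unconfirmed gain_unconfirmed price by (simp add: dev_util_eq sum_nonpos)
  show ?thesis
  proof (cases "2 \<le> card I")
    case True
    then obtain a b where ab: "a \<in> I" "b \<in> I" "a \<noteq> b" "dev_second \<le> bids Q ! a" "dev_second \<le> bids Q ! b"
      using second_bid_witnesses[OF finite_available] by metis
    show ?thesis
    proof (cases "a \<in> coalition Q \<or> b \<in> coalition Q")
      case True
      then obtain c where "c \<in> coalition Q" "dev_price \<le> bids Q ! c" using ab price by auto
      then show ?thesis using dev_util_le_val_if_unconfirmed[OF unconfirmed[simplified]]
          val_le_honest_util[OF deviating] by (fastforce simp: coalition_def)
    next
      case False
      then obtain a' b' where "a' < length P" "b' < length P" "a' \<noteq> b'"
        "dev_second \<le> bids P ! a'" "dev_second \<le> bids P ! b'"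
        using two_others_honest_bids ab by metis
      then have "min dev_second r \<le> honest_price" using sopp_price_included_ge by simp
      then show ?thesis using util_le assms honest_price_le_util by simp
    qed
  next
    case False
    then have "dev_second = 0" by (simp add: second_bid_eq_0)
    then show ?thesis using util_le honest_util_nonneg[of True] by linarith
  qed
qed

lemma dev_util_le_honest_high:
  assumes "r \<le> dev_second"
  shows "dev_util \<le> honest_util True"
proof -
  have price: "dev_price = r" using assms by (simp add: sopp_price_def)
  have "2 \<le> card I"
  proof (rule ccontr)
    assume "\<not> 2 \<le> card I"
    then have "dev_second = 0" by (simp add: second_bid_eq_0)
    then show False using assms reserve_pos by simp
  qed
  then obtain a b where ab: "a \<in> I" "b \<in> I" "a \<noteq> b" "r \<le> bids Q ! a" "r \<le> bids Q ! b"
    using second_bid_witnesses[OF finite_available] assms by (metis order_trans)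
  have excess_le: "(\<Sum>j\<in>coalition Q. max 0 (val vs Q j - r)) \<le> excess"
    using sum_val_le[OF deviating, of "\<lambda>x. max 0 (x - r)"] reserve_pos by simp
  show ?thesis
  proof (cases "\<exists>a'<length P. \<exists>b'<length P. a' \<noteq> b' \<and> r \<le> bids P ! a' \<and> r \<le> bids P ! b'")
    case True
    then obtain a' b' where "a' < length P" "b' < length P" "a' \<noteq> b'" "r \<le> bids P ! a'" "r \<le> bids P ! b'"
      by blast
    then have "r + excess \<le> honest_util True" by (rule reserve_plus_excess_le_honest_util)
    moreover have "(\<Sum>j\<in>coalition Q. dev_gain j) \<le> (\<Sum>j\<in>coalition Q. max 0 (val vs Q j - r))"
      using gain_le_excess[OF price] by (rule sum_mono)
    ultimately show ?thesis using excess_le price by (simp add: dev_util_eq)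
  next
    case False
    then obtain c where c: "c \<in> I" "c \<in> coalition Q" "r \<le> bids Q ! c"
      using two_others_honest_bids[OF ab(1-3) _ _ ab(4,5)] ab by metis
    then have "confirmed r (bids Q) I c" by (simp add: confirmed_iff)
    then have "dev_util \<le> min (val vs Q c) r + excess"
      using sum_gain_le_excess_confirmed[OF price c(2), of vs] excess_le price
      by (simp add: dev_util_eq)
    also have "\<dots> \<le> honest_util True"
      using min_plus_excess_le_honest_util[OF False] val_le_honest_util[OF deviating] c(2)
      by (simp add: coalition_def)
    finally show ?thesis .
  qed
qed

lemma dev_util_le_honest: "dev_util \<le> honest_util True"
  using dev_util_le_honest_low dev_util_le_honest_high by fastforce

end

section \<open>Deviations of a single user\<close>

lemma sum_gain_single_user:
  assumes "dev_profile [v] Q" "0 \<le> sopp_price r (bids Q) I"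
  shows "(\<Sum>j\<in>coalition Q. gain r [v] Q I j) \<le> 0 \<or>
    (\<exists>u<length Q. snd (Q ! u) = Member 0 \<and> confirmed r (bids Q) I u \<and>
       (\<Sum>j\<in>coalition Q. gain r [v] Q I j) \<le> v - sopp_price r (bids Q) I)"
proof -
  have member_0: "snd (Q ! j) = Member 0" if "j < length Q" "snd (Q ! j) = Member i" for j i
    using dev_profile_member_lt[OF assms(1) that] that by simp
  have nonpos: "gain r [v] Q I j \<le> 0"
    if "j \<in> coalition Q" "\<not> (snd (Q ! j) = Member 0 \<and> confirmed r (bids Q) I j)" for j
  proof (cases "confirmed r (bids Q) I j")
    case True
    then have "snd (Q ! j) = Fake" using that member_0 by (cases "snd (Q ! j)") (auto simp: coalition_def)
    then show ?thesis using True assms(2) by (simp add: gain_confirmed val_def true_val_def)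
  qed (use gain_unconfirmed in blast)
  show ?thesis
  proof (cases "\<exists>u\<in>coalition Q. snd (Q ! u) = Member 0 \<and> confirmed r (bids Q) I u")
    case True
    then obtain u where u: "u \<in> coalition Q" "snd (Q ! u) = Member 0" "confirmed r (bids Q) I u" by blast
    have "gain r [v] Q I j \<le> 0" if "j \<in> coalition Q - {u}" for j
    proof (rule nonpos)
      show "j \<in> coalition Q" using that by simp
      show "\<not> (snd (Q ! j) = Member 0 \<and> confirmed r (bids Q) I j)"
        using that u dev_profile_member_unique[OF assms(1), of j u 0] by (auto simp: coalition_def)
    qed
    then have "(\<Sum>j\<in>coalition Q. gain r [v] Q I j) \<le> gain r [v] Q I u"
      by (intro sum_le_single[OF finite_coalition u(1)]) blast
    then have "(\<Sum>j\<in>coalition Q. gain r [v] Q I j) \<le> v - sopp_price r (bids Q) I"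
      using u by (simp add: gain_confirmed val_def true_val_def)
    then show ?thesis using u by (auto simp: coalition_def)
  next
    case False
    then show ?thesis using nonpos by (simp add: sum_nonpos)
  qed
qed

lemma (in honest_setting) single_user_coalition:
  assumes "vs = [v]"
  obtains uh where "uh < length P" "bids P ! uh = v" "coalition P = {uh}"
proof -
  obtain uh where uh: "uh < length P" "snd (P ! uh) = Member 0" "bids P ! uh = v"
    using honest_position[OF honest, of 0] assms by auto
  have "j = uh" if j: "j \<in> coalition P" for j
  proof -
    obtain i where "i < length vs" "snd (P ! j) = Member i" using honest_member[OF honest j] by metis
    then show ?thesis
      using j uh assms dev_profile_member_unique[OF dev_profile_if_honest[OF honest], of j uh 0]
      by (simp add: coalition_def)
  qed
  then have "coalition P = {uh}" using uh by (auto simp: coalition_def)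
  then show ?thesis using that uh by blast
qed

lemma other_bid_le_sopp_price:
  assumes "same_others P Q" "confirmed r (bids Q) (included r (bids Q)) u" "snd (Q ! u) \<noteq> Other"
    "j < length P" "snd (P ! j) = Other"
  shows "min (bids P ! j) r \<le> sopp_price r (bids Q) (included r (bids Q))"
proof -
  obtain c where c: "c < length Q" "snd (Q ! c) = Other" "fst (Q ! c) = fst (P ! j)"
    using same_others_bid[OF assms(1,4,5)] by blast
  then have "c \<noteq> u" using assms(3) by auto
  then show ?thesis using sopp_price_included_ge_others[OF assms(2), of c] c assms(4) by simp
qed

lemma (in honest_setting) single_user_no_gain:
  assumes "vs = [v]" "dev_profile vs Q" "same_others P Q"
  shows "weak_util (sopp r) False vs Q (included r (bids Q)) \<le> honest_util False"
proof -
  define p where "p = sopp_price r (bids Q) (included r (bids Q))"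
  have "0 \<le> p" unfolding p_def using reserve_pos included_subset dev_profile_bids_nonneg[OF assms(2)]
    by (intro sopp_price_nonneg finite_included) fastforce+
  then consider (no_gain) "weak_util (sopp r) False vs Q (included r (bids Q)) \<le> 0"
    | (confirmed) u where "u < length Q" "snd (Q ! u) = Member 0"
        "confirmed r (bids Q) (included r (bids Q)) u"
        "weak_util (sopp r) False vs Q (included r (bids Q)) \<le> v - p"
    using sum_gain_single_user[of v Q r] assms(1,2) unfolding p_def by (auto simp: weak_util_sopp)
  then show ?thesis
  proof cases
    case no_gain
    then show ?thesis using honest_util_nonneg by (rule order_trans)
  next
    case (confirmed u)
    obtain uh where uh: "uh < length P" "bids P ! uh = v" "coalition P = {uh}"
      using single_user_coalition[OF assms(1)] by blast
    have "\<forall>j<length (bids P). j \<noteq> uh \<longrightarrow> min (bids P ! j) r \<le> p"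
      using other_bid_le_sopp_price[OF assms(3) confirmed(3)] confirmed(2) uh(3)
      unfolding p_def by (auto simp: coalition_def)
    then have "honest_price \<le> p" using sopp_price_included_le \<open>0 \<le> p\<close> by blast
    have "honest_util False = honest_gain uh" using uh(3) by (simp add: honest_util_eq)
    show ?thesis
    proof (cases "confirmed r (bids P) (included r (bids P)) uh")
      case True
      then have "honest_util False = v - honest_price"
        using \<open>honest_util False = honest_gain uh\<close> uh honest_val_eq_bid[OF honest, of uh]
        by (simp add: gain_confirmed)
      then show ?thesis using \<open>honest_price \<le> p\<close> confirmed(4) by linarith
    next
      case False
      then have "v \<le> honest_price" using unconfirmed_le_sopp_price[of uh "bids P" r] uh by simp
      then show ?thesis using \<open>honest_price \<le> p\<close> confirmed(4) honest_util_nonneg[of False] by linarith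
    qed
  qed
qed

lemma sopp_no_gain_coalition:
  assumes "0 < r"
  shows "no_gain (sopp r) True vs"
  unfolding no_gain_def
proof (intro allI impI)
  fix P Q I
  assume "honest_profile vs P \<and> dev_profile vs Q \<and> same_others P Q \<and>
    (if True then I \<subseteq> {..<length Q} else I = incl_rule (sopp r) (bids Q))"
  then interpret scp_deviation r vs P Q I using assms by unfold_locales auto
  show "dev_util \<le> honest_util True" by (rule dev_util_le_honest)
qed

lemma sopp_no_gain_user:
  assumes "0 < r"
  shows "no_gain (sopp r) False [v]"
  unfolding no_gain_def
proof (intro allI impI)
  fix P Q I
  assume deviation: "honest_profile [v] P \<and> dev_profile [v] Q \<and> same_others P Q \<and>
    (if False then I \<subseteq> {..<length Q} else I = incl_rule (sopp r) (bids Q))"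
  then interpret honest_setting r "[v]" P using assms by unfold_locales auto
  show "weak_util (sopp r) False [v] Q I \<le> honest_util False"
    using single_user_no_gain deviation by auto
qed

theorem mainTheorem7:
  fixes r :: real
  assumes "r > 0"
  shows "weak_UIC (sopp r) \<and> weak_MIC (sopp r) \<and> (\<forall>c::nat. c \<ge> 1 \<longrightarrow> weak_SCP c (sopp r))"
  using sopp_no_gain_user[OF assms] sopp_no_gain_coalition[OF assms]
  unfolding weak_UIC_def weak_MIC_def weak_SCP_def by auto

end
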